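(* Identify ${\bf k}^3$ with the space $S^2{\bf k}^2$ of binary quadratic forms, on which $SL_2$ acts through its image $SO_3=SO(S^2{\bf k}^2,Q)$, where $Q$ is the (up to scalar unique) nondegenerate $SL_2$-invariant quadratic form. Then the morphism $\varphi:{\bf k}^2\oplus l{\bf k}^3\to(l+1){\bf k}^3$, $\varphi(e,Q_1,\dots,Q_l)=(Q_1,\dots,Q_l,e^2)$, induces an isomorphism ${\bf k}[{\bf k}^2\oplus l{\bf k}^3]^{SL_2}\cong{\bf k}[(l+1){\bf k}^3]^{SO_3}/(d)$, where $d=Q(v_{l+1},v_{l+1})$ is the quadratic form evaluated on the last component.
   Context: ${\bf k}$ is algebraically closed of characteristic $0$; $l{\bf k}^3$ denotes the direct sum of $l$ copies of ${\bf k}^3$, with diagonal action; $e^2\in S^2{\bf k}^2$ denotes the square of the vector $e\in{\bf k}^2$. *)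

theory Defs
  imports "HOL-Analysis.Analysis" "HOL-Computational_Algebra.Polynomial"
begin

inductive_set pfun :: "('a \<Rightarrow> 'k::comm_ring_1) set \<Rightarrow> ('a \<Rightarrow> 'k) set"
  for C :: "('a \<Rightarrow> 'k) set" where
  pf_const: "(\<lambda>_. c) \<in> pfun C"
| pf_coord: "x \<in> C \<Longrightarrow> x \<in> pfun C"
| pf_add: "f \<in> pfun C \<Longrightarrow> g \<in> pfun C \<Longrightarrow> (\<lambda>v. f v + g v) \<in> pfun C"
| pf_mult: "f \<in> pfun C \<Longrightarrow> g \<in> pfun C \<Longrightarrow> (\<lambda>v. f v * g v) \<in> pfun C"

definition alg_closed :: "'k::field itself \<Rightarrow> bool" where
  "alg_closed _ \<longleftrightarrow> (\<forall>p::'k poly. degree p > 0 \<longrightarrow> (\<exists>x. poly p x = 0))"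

text \<open>k^3 = S^2 k^2: coordinates (a,b,c) of a \<epsilon>1^2 + b \<epsilon>1\<epsilon>2 + c \<epsilon>2^2.\<close>
definition sq_vec :: "'k::comm_ring_1 ^ 2 \<Rightarrow> 'k ^ 3" where
  "sq_vec e = (\<chi> i. if i = 0 then (e$0)^2 else if i = 1 then 2 * (e$0) * (e$1) else (e$1)^2)"

text \<open>Action of g in GL_2 on S^2 k^2, g(u v) = (g u)(g v).\<close>
definition sym2_act :: "'k::comm_ring_1 ^ 2 ^ 2 \<Rightarrow> 'k ^ 3 \<Rightarrow> 'k ^ 3" where
  "sym2_act g v =
     (\<chi> i. if i = 0 then v$0 * (g$0$0)^2 + v$1 * g$0$0 * g$0$1 + v$2 * (g$0$1)^2
           else if i = 1 then 2 * v$0 * g$0$0 * g$1$0 + v$1 * (g$0$0 * g$1$1 + g$0$1 * g$1$0)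
                              + 2 * v$2 * g$0$1 * g$1$1
           else v$0 * (g$1$0)^2 + v$1 * g$1$0 * g$1$1 + v$2 * (g$1$1)^2)"

text \<open>The nondegenerate SL_2-invariant quadratic form on S^2 k^2 (discriminant).\<close>
definition Qform :: "'k::comm_ring_1 ^ 3 \<Rightarrow> 'k" where
  "Qform v = (v$1)^2 - 4 * (v$0) * (v$2)"

definition SL2 :: "('k::comm_ring_1 ^ 2 ^ 2) set" where
  "SL2 = {g. det g = 1}"

definition SO3 :: "('k::comm_ring_1 ^ 3 ^ 3) set" where
  "SO3 = {M. det M = 1 \<and> (\<forall>v. Qform (M *v v) = Qform v)}"

text \<open>(l+1) k^3: points are nat \<Rightarrow> 'k^3, components 0..l used.\<close>
definition coords_V :: "nat \<Rightarrow> ((nat \<Rightarrow> 'k ^ 3) \<Rightarrow> 'k) set" where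
  "coords_V l = {(\<lambda>v. v i $ j) | i j. i \<le> l}"

text \<open>k^2 + l k^3: points are (e, Q) with components Q 1 .. Q l used.\<close>
definition coords_W :: "nat \<Rightarrow> (('k ^ 2) \<times> (nat \<Rightarrow> 'k ^ 3) \<Rightarrow> 'k) set" where
  "coords_W l = {(\<lambda>(e,Q). e $ j) | j. True} \<union> {(\<lambda>(e,Q). Q i $ j) | i j. 1 \<le> i \<and> i \<le> l}"

definition inv_SO3 :: "nat \<Rightarrow> ((nat \<Rightarrow> 'k::comm_ring_1 ^ 3) \<Rightarrow> 'k) set" where
  "inv_SO3 l = {f \<in> pfun (coords_V l). \<forall>M\<in>SO3. \<forall>v. f (\<lambda>i. M *v v i) = f v}"

definition inv_SL2 :: "nat \<Rightarrow> (('k::comm_ring_1 ^ 2) \<times> (nat \<Rightarrow> 'k ^ 3) \<Rightarrow> 'k) set" where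
  "inv_SL2 l = {f \<in> pfun (coords_W l).
      \<forall>g\<in>SL2. \<forall>e Q. f (g *v e, \<lambda>i. sym2_act g (Q i)) = f (e, Q)}"

text \<open>phi(e,Q_1..Q_l) = (Q_1,..,Q_l,e^2): component i<l is Q_(i+1), component l is e^2.\<close>
definition phi :: "nat \<Rightarrow> ('k::comm_ring_1 ^ 2) \<times> (nat \<Rightarrow> 'k ^ 3) \<Rightarrow> (nat \<Rightarrow> 'k ^ 3)" where
  "phi l = (\<lambda>(e,Q). \<lambda>i. if i < l then Q (Suc i) else sq_vec e)"

definition dlast :: "nat \<Rightarrow> (nat \<Rightarrow> 'k::comm_ring_1 ^ 3) \<Rightarrow> 'k" where
  "dlast l v = Qform (v l)"

end

theory Submission
  imports Defs
begin

(*
  Via g |-> Sym^2 g, SL_2 maps onto SO_3: the outer columns of M in SO_3 are isotropic, hence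
  squares p^2, r^2, and the remaining entries of M are then forced to be those of Sym^2 (p r).
  As phi is equivariant, SO_3-invariants pull back to SL_2-invariants.

  Surjectivity: split an SL_2-invariant F(e, Q) into components homogeneous in e.  Each is
  invariant (scale e), the odd ones vanish (g = -1), and the one of degree 2k is a binary form
  c(Q) of degree 2k evaluated at e.  Pairing c(Q) apolarly with the k-th power of the quadratic
  form v_l gives a polynomial in (Q, v_l) that equals c(Q)(e) at v_l = e^2, and it is invariant
  because the apolar pairing is; the latter need only be checked on powers of linear forms,
  which span.

  Kernel: with v_l = (a, b, c) and d = b^2 - 4ac, every polynomial function is R_0 + b R_1
  modulo d, with R_0, R_1 free of b.  If f pulls back to 0, it vanishes on the null cone
  {d = 0}, which consists of the squares e^2; taking b = 2s and b = -2s with s^2 = ac gives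
  R_0 = 0 and s R_1 = 0, hence R_1 = 0 by density.  The quotient f/d is invariant because d is
  and d does not vanish on a dense set.
*)

lemma pfun_cmult: "f \<in> pfun C \<Longrightarrow> (\<lambda>v. a * f v) \<in> pfun C"
  using pf_mult[OF pf_const] .

lemma pfun_diff: "f \<in> pfun C \<Longrightarrow> g \<in> pfun C \<Longrightarrow> (\<lambda>v. f v - g v) \<in> pfun C"
  using pf_add[OF _ pfun_cmult[of g C "-1"], of f] by simp

lemma pfun_power: "f \<in> pfun C \<Longrightarrow> (\<lambda>v. f v ^ n) \<in> pfun C"
  by (induction n) (auto intro: pf_const pf_mult)

lemma pfun_sum:
  assumes "finite A" "\<And>i. i \<in> A \<Longrightarrow> f i \<in> pfun C"
  shows "(\<lambda>v. \<Sum>i\<in>A. f i v) \<in> pfun C"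
  using assms
proof (induction A rule: finite_induct)
  case empty
  then show ?case using pf_const[of 0] by simp
next
  case (insert x F)
  then show ?case using pf_add[of "f x" C "\<lambda>v. \<Sum>i\<in>F. f i v"] by simp
qed

lemma pfun_compose:
  assumes "f \<in> pfun C" "\<And>c. c \<in> C \<Longrightarrow> (\<lambda>x. c (\<phi> x)) \<in> pfun C'"
  shows "(\<lambda>x. f (\<phi> x)) \<in> pfun C'"
  using assms(1) by induction (auto intro: pfun.intros assms(2))

lemma pfun_mono: "C \<subseteq> C' \<Longrightarrow> f \<in> pfun C \<Longrightarrow> f \<in> pfun C'"
  using pfun_compose[of f C "\<lambda>x. x" C'] by (auto intro: pf_coord)

lemma pfun_eq_if_coords_eq:
  assumes "f \<in> pfun C" "\<And>c. c \<in> C \<Longrightarrow> c x = c y"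
  shows "f x = f y"
  using assms(1) by induction (auto simp: assms(2))

lemma pfun_along_curve_is_poly:
  fixes f :: "'a \<Rightarrow> 'k::comm_ring_1"
  assumes "f \<in> pfun C" "\<And>c. c \<in> C \<Longrightarrow> \<exists>p. \<forall>t. c (\<gamma> t) = poly p t"
  shows "\<exists>p. \<forall>t. f (\<gamma> t) = poly p t"
  using assms(1)
proof induction
  case (pf_const c)
  then show ?case by (intro exI[of _ "[:c:]"]) simp
next
  case (pf_coord x)
  then show ?case using assms(2) by blast
next
  case (pf_add f g)
  then obtain p q where "\<forall>t. f (\<gamma> t) = poly p t" "\<forall>t. g (\<gamma> t) = poly q t" by blast
  then show ?case by (intro exI[of _ "p + q"]) simp
next
  case (pf_mult f g)
  then obtain p q where "\<forall>t. f (\<gamma> t) = poly p t" "\<forall>t. g (\<gamma> t) = poly q t" by blast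
  then show ?case by (intro exI[of _ "p * q"]) simp
qed

lemma poly_eq_0_if_roots_cofinite:
  fixes p :: "'k::{idom, ring_char_0} poly"
  assumes "finite S" "\<And>t. t \<notin> S \<Longrightarrow> poly p t = 0"
  shows "p = 0"
proof (rule ccontr)
  assume "p \<noteq> 0"
  then have "finite {x. poly p x = 0}" by (rule poly_roots_finite)
  moreover have "- S \<subseteq> {x. poly p x = 0}" using assms(2) by auto
  ultimately have "finite (- S)" by (rule finite_subset[rotated])
  with assms(1) show False using infinite_UNIV_char_0 by (metis finite_Un Compl_partition)
qed

lemma power_sum_eq_0_imp_coeff_eq_0:
  fixes a :: "nat \<Rightarrow> 'k::{idom, ring_char_0}"
  assumes "\<And>t. (\<Sum>i\<le>N. a i * t ^ i) = 0" "i \<le> N"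
  shows "a i = 0"
proof -
  define p where "p = (\<Sum>i\<le>N. monom (a i) i)"
  have "\<forall>t. poly p t = 0" using assms(1) by (simp add: p_def poly_sum poly_monom)
  then have "coeff p i = 0" by (simp add: poly_all_0_iff_0)
  then show ?thesis using assms(2) by (simp add: p_def coeff_sum)
qed

lemma poly_altdef_le:
  fixes p :: "'k::comm_ring_1 poly"
  assumes "degree p \<le> n"
  shows "poly p x = (\<Sum>i\<le>n. coeff p i * x ^ i)"
  unfolding poly_altdef
  by (rule sum.mono_neutral_left) (use assms in \<open>auto simp: coeff_eq_0\<close>)

lemma coeff_mult_bound_sum:
  fixes p q :: "'k::comm_ring_1 poly"
  assumes "degree p \<le> n" "degree q \<le> m"
  shows "coeff (p * q) (n + m) = coeff p n * coeff q m"
proof (cases "degree p = n \<and> degree q = m")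
  case True
  then show ?thesis using coeff_mult_degree_sum[of p q] by simp
next
  case False
  then have "degree (p * q) < n + m" using degree_mult_le[of p q] assms by linarith
  moreover have "coeff p n * coeff q m = 0"
    using False assms by (auto simp: coeff_eq_0 le_less)
  ultimately show ?thesis by (simp add: coeff_eq_0)
qed

lemma degree_linear_poly_power: "degree ([:a, b:] ^ m) \<le> m"
  using degree_power_le[of "[:a, b:]" m] by (simp add: order_trans)

lemma alg_closed_square_root:
  assumes "alg_closed TYPE('k::field)"
  shows "\<exists>s::'k. s\<^sup>2 = a"
proof -
  have "degree [:-a, 0, 1::'k:] > 0" by simp
  then obtain x where "poly [:-a, 0, 1:] x = 0" using assms unfolding alg_closed_def by blast
  then show ?thesis by (intro exI[of _ x]) (simp add: power2_eq_square algebra_simps)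
qed

section \<open>Binary forms\<close>

definition vec2 :: "'k \<Rightarrow> 'k \<Rightarrow> 'k^2" where
  "vec2 x y = (\<chi> i. if i = 0 then x else y)"

lemma vec2_nth [simp]: "vec2 x y $ 0 = x" "vec2 x y $ 1 = y"
  by (simp_all add: vec2_def)

lemma numeral_2_eq_0_bit2 [simp]: "(2::2) = 0"
  by simp

lemma mult_vec2_nth: "(g *v e) $ i = g$i$0 * e$0 + g$i$1 * (e::'k::comm_ring_1^2)$1"
  by (simp add: matrix_vector_mult_def sum_2 add.commute)

lemma vec2_mult_nth: "(u v* g) $ i = u$0 * g$0$i + (u::'k::comm_ring_1^2)$1 * g$1$i"
  by (simp add: vector_matrix_mult_def sum_2 add.commute)

text \<open>A binary form of degree \<open>n\<close> is encoded by its dehomogenization \<open>p\<close>, a polynomial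
  of degree at most \<open>n\<close>; \<open>homog_eval n p u\<close> is the value of the form at \<open>u\<close>.\<close>

definition homog_eval :: "nat \<Rightarrow> 'k::comm_ring_1 poly \<Rightarrow> 'k^2 \<Rightarrow> 'k" where
  "homog_eval n p u = (\<Sum>j\<le>n. coeff p j * u$0 ^ (n - j) * u$1 ^ j)"

lemma homog_eval_altdef:
  fixes p :: "'k::field poly"
  assumes "degree p \<le> n"
  shows "homog_eval n p u =
    (if u$0 = 0 then coeff p n * u$1 ^ n else u$0 ^ n * poly p (u$1 / u$0))"
proof (cases "u$0 = 0")
  case True
  have "homog_eval n p u = (\<Sum>j\<le>n. if j = n then coeff p n * u$1 ^ n else 0)"
    unfolding homog_eval_def by (rule sum.cong) (auto simp: True)
  then show ?thesis using True by simp
next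
  case False
  have "u$0 ^ n * poly p (u$1 / u$0) = (\<Sum>j\<le>n. coeff p j * (u$0 ^ n * (u$1 / u$0) ^ j))"
    unfolding poly_altdef_le[OF assms] by (simp add: sum_distrib_left algebra_simps)
  also have "\<dots> = homog_eval n p u"
    unfolding homog_eval_def
  proof (rule sum.cong)
    fix j assume "j \<in> {..n}"
    then have "u$0 ^ n = u$0 ^ (n - j) * u$0 ^ j" by (simp flip: power_add)
    then show "coeff p j * (u$0 ^ n * (u$1 / u$0) ^ j) = coeff p j * u$0 ^ (n - j) * u$1 ^ j"
      using False by (simp add: power_divide)
  qed simp
  finally show ?thesis using False by simp
qed

lemma homog_eval_0 [simp]: "homog_eval n 0 u = 0"
  by (simp add: homog_eval_def)

lemma homog_eval_const: "homog_eval 0 [:c:] u = c"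
  by (simp add: homog_eval_def)

lemma homog_eval_add: "homog_eval n (p + q) u = homog_eval n p u + homog_eval n q u"
  by (simp add: homog_eval_def sum.distrib algebra_simps)

lemma homog_eval_smult: "homog_eval n (smult a p) u = a * homog_eval n p u"
  by (simp add: homog_eval_def sum_distrib_left algebra_simps)

lemma homog_eval_sum:
  "finite A \<Longrightarrow> homog_eval n (\<Sum>i\<in>A. p i) u = (\<Sum>i\<in>A. homog_eval n (p i) u)"
  by (induction A rule: finite_induct) (auto simp: homog_eval_add)

lemma homog_eval_scale: "homog_eval n p (t *s u) = t ^ n * homog_eval n p u"
  unfolding homog_eval_def sum_distrib_left
proof (rule sum.cong)
  fix j assume "j \<in> {..n}"
  then have "t ^ n = t ^ (n - j) * t ^ j" by (simp flip: power_add)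
  then show "coeff p j * (t *s u)$0 ^ (n - j) * (t *s u)$1 ^ j
      = t ^ n * (coeff p j * u$0 ^ (n - j) * u$1 ^ j)"
    by (simp add: power_mult_distrib algebra_simps)
qed simp

lemma homog_eval_mult:
  fixes p q :: "'k::field poly"
  assumes "degree p \<le> n" "degree q \<le> m"
  shows "homog_eval (n + m) (p * q) u = homog_eval n p u * homog_eval m q u"
proof -
  have pq: "degree (p * q) \<le> n + m" using degree_mult_le[of p q] assms by linarith
  show ?thesis
    unfolding homog_eval_altdef[OF assms(1)] homog_eval_altdef[OF assms(2)] homog_eval_altdef[OF pq]
    using coeff_mult_bound_sum[OF assms] by (simp add: power_add)
qed

lemma homog_eval_power:
  fixes p :: "'k::field poly"
  assumes "degree p \<le> m"
  shows "homog_eval (m * k) (p ^ k) u = homog_eval m p u ^ k"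
proof (induction k)
  case 0
  then show ?case by (simp add: homog_eval_def)
next
  case (Suc k)
  have "degree (p ^ k) \<le> m * k"
    using degree_power_le[of p k] assms by (metis le_trans mult.commute mult_le_mono1)
  then have "homog_eval (m + m * k) (p * p ^ k) u = homog_eval m p u * homog_eval (m * k) (p ^ k) u"
    by (rule homog_eval_mult[OF assms])
  then show ?case using Suc by simp
qed

lemma homog_eval_linear_power:
  fixes a b :: "'k::field"
  shows "homog_eval m ([:a, b:] ^ m) u = (a * u$0 + b * u$1) ^ m"
proof -
  have "degree [:a, b:] \<le> 1" by simp
  from homog_eval_power[OF this, of m u] show ?thesis by (simp add: homog_eval_def)
qed

lemma homog_eval_vec2_1:
  fixes p :: "'k::field poly"
  assumes "degree p \<le> n"
  shows "homog_eval n p (vec2 1 t) = poly p t"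
  using homog_eval_altdef[OF assms] by simp

lemma homog_eval_inject:
  fixes p q :: "'k::field_char_0 poly"
  assumes "degree p \<le> n" "degree q \<le> n" "\<And>u. homog_eval n p u = homog_eval n q u"
  shows "p = q"
  by (rule poly_ext) (metis homog_eval_vec2_1 assms)

lemma homog_eval_odd_eq_0:
  fixes p :: "'k::field_char_0 poly"
  assumes "homog_eval n p ((-1) *s u) = homog_eval n p u" "odd n"
  shows "homog_eval n p u = 0"
  using assms unfolding homog_eval_scale by simp

lemma homog_components_eq:
  fixes P P' :: "nat \<Rightarrow> 'k::field_char_0 poly"
  assumes "\<And>t. (\<Sum>n\<le>N. homog_eval n (P' n) (t *s u')) = (\<Sum>n\<le>N. homog_eval n (P n) (t *s u))"
    and "n \<le> N"
  shows "homog_eval n (P' n) u' = homog_eval n (P n) u"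
proof -
  have "(\<Sum>n\<le>N. (homog_eval n (P' n) u' - homog_eval n (P n) u) * t ^ n) = 0" for t
    using assms(1)[of t] by (simp add: homog_eval_scale algebra_simps sum_subtractf)
  from power_sum_eq_0_imp_coeff_eq_0[OF this assms(2)] show ?thesis by simp
qed

definition form_act :: "nat \<Rightarrow> 'k::comm_ring_1^2^2 \<Rightarrow> 'k poly \<Rightarrow> 'k poly" where
  "form_act n g r = (\<Sum>j\<le>n. smult (coeff r j) ([:g$0$0, g$1$0:] ^ (n - j) * [:g$0$1, g$1$1:] ^ j))"

lemma degree_form_act: "degree (form_act n g r) \<le> n"
  unfolding form_act_def
proof (rule degree_sum_le)
  fix j assume "j \<in> {..n}"
  then have "degree ([:g$0$0, g$1$0:] ^ (n - j) * [:g$0$1, g$1$1:] ^ j) \<le> n"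
    using degree_mult_le[of "[:g$0$0, g$1$0:] ^ (n - j)" "[:g$0$1, g$1$1:] ^ j"]
      degree_linear_poly_power[of "g$0$0" "g$1$0" "n - j"] degree_linear_poly_power[of "g$0$1" "g$1$1" j]
    by simp
  then show "degree (smult (coeff r j) ([:g$0$0, g$1$0:] ^ (n - j) * [:g$0$1, g$1$1:] ^ j)) \<le> n"
    using degree_smult_le le_trans by blast
qed simp

lemma homog_eval_form_act:
  fixes g :: "'k::field^2^2"
  shows "homog_eval n (form_act n g r) u = homog_eval n r (u v* g)"
proof -
  have "homog_eval n ([:g$0$0, g$1$0:] ^ (n - j) * [:g$0$1, g$1$1:] ^ j) u
      = (u v* g)$0 ^ (n - j) * (u v* g)$1 ^ j" if "j \<le> n" for j
  proof -
    have "homog_eval ((n - j) + j) ([:g$0$0, g$1$0:] ^ (n - j) * [:g$0$1, g$1$1:] ^ j) u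
        = homog_eval (n - j) ([:g$0$0, g$1$0:] ^ (n - j)) u * homog_eval j ([:g$0$1, g$1$1:] ^ j) u"
      by (rule homog_eval_mult) (rule degree_linear_poly_power)+
    then show ?thesis using that by (simp add: homog_eval_linear_power vec2_mult_nth mult.commute)
  qed
  then show ?thesis
    unfolding form_act_def homog_eval_sum[OF finite_atMost] homog_eval_smult
    by (simp add: homog_eval_def mult.assoc)
qed

lemma form_act_linear_power:
  fixes g :: "'k::field_char_0^2^2"
  shows "form_act n g ([:e$0, e$1:] ^ n) = [:(g *v e)$0, (g *v e)$1:] ^ n"
  by (rule homog_eval_inject[OF degree_form_act degree_linear_poly_power])
    (simp add: homog_eval_form_act homog_eval_linear_power vec2_mult_nth mult_vec2_nth
      algebra_simps)

lemma form_act_power: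
  fixes g :: "'k::field_char_0^2^2"
  assumes "degree r \<le> m"
  shows "form_act (m * k) g (r ^ k) = form_act m g r ^ k"
proof (rule homog_eval_inject[OF degree_form_act])
  show "degree (form_act m g r ^ k) \<le> m * k"
    using degree_power_le[of "form_act m g r" k] degree_form_act[of m g r]
    by (metis le_trans mult_le_mono1)
qed (simp add: homog_eval_form_act homog_eval_power[OF assms] homog_eval_power[OF degree_form_act])

definition apolar :: "nat \<Rightarrow> 'k::field poly \<Rightarrow> 'k poly \<Rightarrow> 'k" where
  "apolar n p r = (\<Sum>j\<le>n. inverse (of_nat (n choose j)) * coeff p j * coeff r j)"

lemma apolar_sum_smult:
  "finite A \<Longrightarrow> apolar n p (\<Sum>i\<in>A. smult (a i) (q i)) = (\<Sum>i\<in>A. a i * apolar n p (q i))"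
  unfolding apolar_def coeff_sum coeff_smult sum_distrib_left
  by (subst sum.swap) (simp add: algebra_simps)

lemma apolar_linear_power:
  fixes p :: "'k::field_char_0 poly"
  shows "apolar n p ([:e$0, e$1:] ^ n) = homog_eval n p e"
  unfolding apolar_def homog_eval_def
  by (rule sum.cong) (simp_all add: coeff_linear_poly_power)

lemma apolar_form_act:
  fixes p p' :: "'k::field_char_0 poly" and g :: "'k^2^2"
  assumes "\<And>e. homog_eval n p' (g *v e) = homog_eval n p e"
  shows "apolar n p' (form_act n g r) = apolar n p r"
proof -
  define \<delta> where "\<delta> i = apolar n p' ([:g$0$0, g$1$0:] ^ (n - i) * [:g$0$1, g$1$1:] ^ i)
      - inverse (of_nat (n choose i)) * coeff p i" for i
  have diff: "apolar n p' (form_act n g r') - apolar n p r' = (\<Sum>i\<le>n. coeff r' i * \<delta> i)" for r'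
    unfolding form_act_def apolar_sum_smult[OF finite_atMost] \<delta>_def
    by (simp add: apolar_def algebra_simps sum_subtractf sum_distrib_left)
  have vanish: "(\<Sum>i\<le>n. (of_nat (n choose i) * \<delta> i) * t ^ i) = 0" for t
  proof -
    have "(\<Sum>i\<le>n. (of_nat (n choose i) * \<delta> i) * t ^ i)
        = apolar n p' (form_act n g ([:1, t:] ^ n)) - apolar n p ([:1, t:] ^ n)"
      unfolding diff by (rule sum.cong) (simp_all add: coeff_linear_poly_power)
    also have "\<dots> = 0"
      using form_act_linear_power[of n g "vec2 1 t"] apolar_linear_power[of n p' "g *v vec2 1 t"]
        apolar_linear_power[of n p "vec2 1 t"] assms by simp
    finally show ?thesis .
  qed
  have "of_nat (n choose i) * \<delta> i = 0" if "i \<le> n" for i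
    using power_sum_eq_0_imp_coeff_eq_0[where a = "\<lambda>i. of_nat (n choose i) * \<delta> i", OF vanish that] .
  then have "\<delta> i = 0" if "i \<le> n" for i
    using that by simp
  then show ?thesis using diff[of r] by simp
qed

section \<open>\<open>SL\<^sub>2\<close> maps onto \<open>SO\<^sub>3\<close>\<close>

definition sym2_matrix :: "'k::comm_ring_1^2^2 \<Rightarrow> 'k^3^3" where
  "sym2_matrix g = (\<chi> i j.
     if i = 0 then (if j = 0 then (g$0$0)\<^sup>2 else if j = 1 then g$0$0 * g$0$1 else (g$0$1)\<^sup>2)
     else if i = 1 then (if j = 0 then 2 * g$0$0 * g$1$0 else if j = 1 then g$0$0 * g$1$1 + g$0$1 * g$1$0
                         else 2 * g$0$1 * g$1$1)
     else (if j = 0 then (g$1$0)\<^sup>2 else if j = 1 then g$1$0 * g$1$1 else (g$1$1)\<^sup>2))"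

lemma numeral_3_eq_0_bit3 [simp]: "(3::3) = 0"
  by simp

definition vec3 :: "'k \<Rightarrow> 'k \<Rightarrow> 'k \<Rightarrow> 'k^3" where
  "vec3 x y z = (\<chi> i. if i = 0 then x else if i = 1 then y else z)"

lemma vec3_nth [simp]: "vec3 x y z $ 0 = x" "vec3 x y z $ 1 = y" "vec3 x y z $ 2 = z"
  by (simp_all add: vec3_def)

lemma mult_vec3: "(M::'k::comm_ring_1^3^3) *v vec3 a b c =
    vec3 (M$0$0 * a + M$0$1 * b + M$0$2 * c) (M$1$0 * a + M$1$1 * b + M$1$2 * c)
      (M$2$0 * a + M$2$1 * b + M$2$2 * c)"
  by (simp add: vec_eq_iff forall_3 matrix_vector_mult_def sum_3 algebra_simps)

lemma Qform_vec3: "Qform (vec3 a b c) = b\<^sup>2 - 4 * a * c"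
  by (simp add: Qform_def)

lemma sq_vec_nth: "sq_vec e $ 0 = (e$0)\<^sup>2" "sq_vec e $ 1 = 2 * e$0 * e$1" "sq_vec e $ 2 = (e$1)\<^sup>2"
  by (simp_all add: sq_vec_def)

lemma sym2_matrix_mult: "sym2_matrix g *v w = sym2_act g w"
  by (simp add: vec_eq_iff matrix_vector_mult_def sum_3 forall_3 sym2_act_def sym2_matrix_def
      algebra_simps)

lemma det_sym2_matrix: "det (sym2_matrix (g::'k::comm_ring_1^2^2)) = det g ^ 3"
  unfolding det_3 det_2 by (simp add: sym2_matrix_def power2_eq_square power3_eq_cube algebra_simps)

lemma Qform_sym2_act: "Qform (sym2_act g w) = (det g)\<^sup>2 * Qform (w::'k::comm_ring_1^3)"
  unfolding det_2 by (simp add: Qform_def sym2_act_def power2_eq_square algebra_simps)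

lemma sq_vec_mult: "sq_vec (g *v e) = sym2_act g (sq_vec (e::'k::comm_ring_1^2))"
  by (simp add: vec_eq_iff forall_3 sq_vec_def sym2_act_def mult_vec2_nth power2_eq_square
      algebra_simps)

lemma Qform_sq_vec: "Qform (sq_vec (e::'k::comm_ring_1^2)) = 0"
  by (simp add: Qform_def sq_vec_def power2_eq_square algebra_simps)

lemma sym2_matrix_in_SO3: "g \<in> SL2 \<Longrightarrow> sym2_matrix g \<in> SO3"
  by (simp add: SL2_def SO3_def det_sym2_matrix sym2_matrix_mult Qform_sym2_act)

lemma isotropic_eq_sq_vec:
  assumes "alg_closed TYPE('k::field_char_0)" and "Qform (w::'k^3) = 0"
  shows "\<exists>e. w = sq_vec e"
proof -
  have b: "(w$1)\<^sup>2 = 4 * w$0 * w$2" using assms(2) by (simp add: Qform_def)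
  show ?thesis
  proof (cases "w$0 = 0")
    case True
    then have "w$1 = 0" using b by simp
    moreover obtain t where "t\<^sup>2 = w$2" using alg_closed_square_root[OF assms(1)] by blast
    ultimately have "w = sq_vec (vec2 0 t)"
      using True by (simp add: vec_eq_iff forall_3 sq_vec_def)
    then show ?thesis by blast
  next
    case False
    obtain s where s: "s\<^sup>2 = w$0" using alg_closed_square_root[OF assms(1)] by blast
    with False have "s \<noteq> 0" by auto
    have "(w$1 / (2 * s))\<^sup>2 = w$2"
      using b s \<open>s \<noteq> 0\<close> False by (simp add: power_divide field_simps power2_eq_square)
    then have "w = sq_vec (vec2 s (w$1 / (2 * s)))"
      using s \<open>s \<noteq> 0\<close> by (simp add: vec_eq_iff forall_3 sq_vec_def field_simps)
    then show ?thesis by blast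
  qed
qed

text \<open>The outer columns are isotropic, hence squares; \<open>Q(M (1,0,1)) = -4\<close> gives
  \<open>det (p r) = \<plusminus>1\<close>.\<close>

lemma SO3_outer_columns:
  fixes M :: "'k::field_char_0^3^3"
  assumes "alg_closed TYPE('k)" and "M \<in> SO3"
  obtains p r :: "'k^2" where "p$0 * r$1 - p$1 * r$0 = 1"
    and "M$0$0 = (p$0)\<^sup>2" "M$1$0 = 2 * p$0 * p$1" "M$2$0 = (p$1)\<^sup>2"
    and "M$0$2 = (r$0)\<^sup>2" "M$1$2 = 2 * r$0 * r$1" "M$2$2 = (r$1)\<^sup>2"
proof -
  have QM: "\<And>v. Qform (M *v v) = Qform v" using assms(2) unfolding SO3_def by auto
  have "Qform (vec3 (M$0$0) (M$1$0) (M$2$0)) = 0"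
    using QM[of "vec3 1 0 0"] by (simp add: mult_vec3 Qform_vec3)
  then obtain p where p: "vec3 (M$0$0) (M$1$0) (M$2$0) = sq_vec p"
    using isotropic_eq_sq_vec[OF assms(1)] by blast
  have "Qform (vec3 (M$0$2) (M$1$2) (M$2$2)) = 0"
    using QM[of "vec3 0 0 1"] by (simp add: mult_vec3 Qform_vec3)
  then obtain q where q: "vec3 (M$0$2) (M$1$2) (M$2$2) = sq_vec q"
    using isotropic_eq_sq_vec[OF assms(1)] by blast
  have pe: "M$0$0 = (p$0)\<^sup>2" "M$1$0 = 2 * p$0 * p$1" "M$2$0 = (p$1)\<^sup>2"
    using arg_cong[OF p, of "\<lambda>v. v$0"] arg_cong[OF p, of "\<lambda>v. v$1"] arg_cong[OF p, of "\<lambda>v. v$2"]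
    by (simp_all add: sq_vec_nth)
  have qe: "M$0$2 = (q$0)\<^sup>2" "M$1$2 = 2 * q$0 * q$1" "M$2$2 = (q$1)\<^sup>2"
    using arg_cong[OF q, of "\<lambda>v. v$0"] arg_cong[OF q, of "\<lambda>v. v$1"] arg_cong[OF q, of "\<lambda>v. v$2"]
    by (simp_all add: sq_vec_nth)
  define D where "D = p$0 * q$1 - p$1 * q$0"
  have "(M$1$0 + M$1$2)\<^sup>2 - 4 * (M$0$0 + M$0$2) * (M$2$0 + M$2$2) = -4"
    using QM[of "vec3 1 0 1"] by (simp add: mult_vec3 Qform_vec3)
  then have D2: "D\<^sup>2 = 1" unfolding pe qe D_def by algebra
  define r where "r = vec2 (D * q$0) (D * q$1)"
  have "r$0 = D * q$0" "r$1 = D * q$1" by (simp_all add: r_def)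
  then have "p$0 * r$1 - p$1 * r$0 = 1"
    and "M$0$2 = (r$0)\<^sup>2" "M$1$2 = 2 * r$0 * r$1" "M$2$2 = (r$1)\<^sup>2"
    using D2 qe unfolding D_def by algebra+
  then show ?thesis using that pe by blast
qed

text \<open>Given the outer columns \<open>p\<^sup>2\<close> and \<open>r\<^sup>2\<close> of \<open>M \<in> SO\<^sub>3\<close>, the middle column \<open>x\<close> is proportional to
  the symmetric product \<open>y = p r\<close> (both are \<open>Q\<close>-orthogonal to \<open>p\<^sup>2\<close> and \<open>r\<^sup>2\<close>), and \<open>det M = 1\<close> forces
  the factor to be \<open>1\<close>.\<close>

lemma SO3_middle_column:
  fixes p0 p1 r0 r1 x0 x1 x2 :: "'k::field_char_0"
  assumes D: "p0 * r1 - p1 * r0 = 1"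
    and Q1: "x1\<^sup>2 - 4 * x0 * x2 = 1"
    and E1: "(2 * p0 * p1 + x1)\<^sup>2 - 4 * (p0\<^sup>2 + x0) * (p1\<^sup>2 + x2) = 1"
    and E2: "(x1 + 2 * r0 * r1)\<^sup>2 - 4 * (x0 + r0\<^sup>2) * (x2 + r1\<^sup>2) = 1"
    and det: "p0\<^sup>2 * x1 * r1\<^sup>2 + x0 * (2 * r0 * r1) * p1\<^sup>2 + r0\<^sup>2 * (2 * p0 * p1) * x2
      - p0\<^sup>2 * (2 * r0 * r1) * x2 - x0 * (2 * p0 * p1) * r1\<^sup>2 - r0\<^sup>2 * x1 * p1\<^sup>2 = 1"
  shows "x0 = p0 * r0 \<and> x1 = p0 * r1 + p1 * r0 \<and> x2 = p1 * r1"
proof -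
  define y0 y1 y2 where "y0 = p0 * r0" "y1 = p0 * r1 + p1 * r0" "y2 = p1 * r1"
  have e1: "x0 * p1\<^sup>2 - x1 * p0 * p1 + x2 * p0\<^sup>2 = 0" using E1 Q1 by algebra
  have e2: "x0 * r1\<^sup>2 - x1 * r0 * r1 + x2 * r0\<^sup>2 = 0" using E2 Q1 by algebra
  have c01: "y0 * x1 = y1 * x0" and c02: "y0 * x2 = y2 * x0" and c12: "y1 * x2 = y2 * x1"
    using e1 e2 D unfolding y0_y1_y2_def by algebra+
  have Qy: "y1\<^sup>2 - 4 * y0 * y2 = 1" using D unfolding y0_y1_y2_def by algebra
  define c where "c = x1 * y1 - 2 * x0 * y2 - 2 * x2 * y0"
  have x: "x0 = c * y0" "x1 = c * y1" "x2 = c * y2"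
    using c01 c02 c12 Qy unfolding c_def by algebra+
  have "c = 1" using det x D unfolding y0_y1_y2_def by algebra
  then show ?thesis using x unfolding y0_y1_y2_def by simp
qed

lemma SO3_eq_sym2_matrix:
  fixes M :: "'k::field_char_0^3^3"
  assumes "alg_closed TYPE('k)" and "M \<in> SO3"
  obtains g where "g \<in> SL2" "M = sym2_matrix g"
proof -
  obtain p r :: "'k^2" where Dr: "p$0 * r$1 - p$1 * r$0 = 1"
    and pe: "M$0$0 = (p$0)\<^sup>2" "M$1$0 = 2 * p$0 * p$1" "M$2$0 = (p$1)\<^sup>2"
    and re: "M$0$2 = (r$0)\<^sup>2" "M$1$2 = 2 * r$0 * r$1" "M$2$2 = (r$1)\<^sup>2"
    using SO3_outer_columns[OF assms] by blast
  have "det M = 1" and QM: "\<And>v. Qform (M *v v) = Qform v" using assms(2) unfolding SO3_def by auto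
  have dM: "det M = M$1$1 * M$2$2 * M$0$0 + M$1$2 * M$2$0 * M$0$1 + M$1$0 * M$2$1 * M$0$2
      - M$1$1 * M$2$0 * M$0$2 - M$1$2 * M$2$1 * M$0$0 - M$1$0 * M$2$2 * M$0$1"
    unfolding det_3 by simp
  have "M$0$1 = p$0 * r$0 \<and> M$1$1 = p$0 * r$1 + p$1 * r$0 \<and> M$2$1 = p$1 * r$1"
  proof (rule SO3_middle_column[OF Dr])
    show "(M$1$1)\<^sup>2 - 4 * M$0$1 * M$2$1 = 1"
      using QM[of "vec3 0 1 0"] by (simp add: mult_vec3 Qform_vec3)
    show "(2 * p$0 * p$1 + M$1$1)\<^sup>2 - 4 * ((p$0)\<^sup>2 + M$0$1) * ((p$1)\<^sup>2 + M$2$1) = 1"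
      using QM[of "vec3 1 1 0"] unfolding pe[symmetric] by (simp add: mult_vec3 Qform_vec3)
    show "(M$1$1 + 2 * r$0 * r$1)\<^sup>2 - 4 * (M$0$1 + (r$0)\<^sup>2) * (M$2$1 + (r$1)\<^sup>2) = 1"
      using QM[of "vec3 0 1 1"] unfolding re[symmetric] by (simp add: mult_vec3 Qform_vec3)
    show "(p$0)\<^sup>2 * M$1$1 * (r$1)\<^sup>2 + M$0$1 * (2 * r$0 * r$1) * (p$1)\<^sup>2 + (r$0)\<^sup>2 * (2 * p$0 * p$1) * M$2$1
      - (p$0)\<^sup>2 * (2 * r$0 * r$1) * M$2$1 - M$0$1 * (2 * p$0 * p$1) * (r$1)\<^sup>2 - (r$0)\<^sup>2 * M$1$1 * (p$1)\<^sup>2 = 1"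
      using \<open>det M = 1\<close> unfolding dM pe re by algebra
  qed
  then have xe: "M$0$1 = p$0 * r$0" "M$1$1 = p$0 * r$1 + p$1 * r$0" "M$2$1 = p$1 * r$1" by auto
  define g :: "'k^2^2" where "g = (\<chi> i j. if j = 0 then p$i else r$i)"
  have ge: "g$0$0 = p$0" "g$1$0 = p$1" "g$0$1 = r$0" "g$1$1 = r$1" by (simp_all add: g_def)
  have "g \<in> SL2" unfolding SL2_def det_2 using Dr by (simp add: ge algebra_simps)
  moreover have "M = sym2_matrix g"
    by (simp add: vec_eq_iff forall_3 sym2_matrix_def ge pe re xe algebra_simps)
  ultimately show ?thesis by (rule that)
qed

section \<open>Invariants of \<open>SO\<^sub>3\<close> pull back to invariants of \<open>SL\<^sub>2\<close>\<close>

lemma coords_V_pfun: "i \<le> l \<Longrightarrow> (\<lambda>v. v i $ j) \<in> pfun (coords_V l)"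
  by (rule pf_coord) (auto simp: coords_V_def)

lemma coords_W_fst_pfun: "(\<lambda>x. fst x $ j) \<in> pfun (coords_W l)"
proof -
  have "(\<lambda>(e::'a^2, Q::nat \<Rightarrow> 'a^3). e $ j) \<in> coords_W l" unfolding coords_W_def by blast
  then show ?thesis by (simp add: pf_coord case_prod_beta')
qed

lemma coords_W_snd_pfun: "1 \<le> i \<Longrightarrow> i \<le> l \<Longrightarrow> (\<lambda>x. snd x i $ j) \<in> pfun (coords_W l)"
proof -
  assume "1 \<le> i" "i \<le> l"
  then have "(\<lambda>(e::'a^2, Q::nat \<Rightarrow> 'a^3). Q i $ j) \<in> coords_W l" unfolding coords_W_def by blast
  then show ?thesis by (simp add: pf_coord case_prod_beta')
qed

lemma pfun_comp_phi:
  assumes "f \<in> pfun (coords_V l)"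
  shows "(\<lambda>x. f (phi l x)) \<in> pfun (coords_W l)"
proof (rule pfun_compose[OF assms])
  fix c :: "(nat \<Rightarrow> 'a^3) \<Rightarrow> 'a" assume "c \<in> coords_V l"
  then obtain i j where c: "c = (\<lambda>v. v i $ j)" "i \<le> l" unfolding coords_V_def by blast
  show "(\<lambda>x. c (phi l x)) \<in> pfun (coords_W l)"
  proof (cases "i < l")
    case True
    then have "(\<lambda>x. c (phi l x)) = (\<lambda>x. snd x (Suc i) $ j)"
      by (auto simp: c phi_def case_prod_beta)
    then show ?thesis using coords_W_snd_pfun[of "Suc i" l j] True by simp
  next
    case False
    then have "(\<lambda>x. c (phi l x)) = (\<lambda>x. sq_vec (fst x) $ j)"
      by (auto simp: c phi_def case_prod_beta)
    moreover have "(\<lambda>x. fst x $ 0 ^ 2) \<in> pfun (coords_W l)" "(\<lambda>x. fst x $ 1 ^ 2) \<in> pfun (coords_W l)"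
      and "(\<lambda>x. 2 * fst x $ 0 * fst x $ 1) \<in> pfun (coords_W l)"
      using pfun_power[OF coords_W_fst_pfun] pf_mult[OF pfun_cmult[OF coords_W_fst_pfun] coords_W_fst_pfun]
      by auto
    ultimately show ?thesis unfolding sq_vec_def by (cases "j = 0"; cases "j = 1") auto
  qed
qed

lemma phi_mult_sym2:
  "phi l (g *v e, \<lambda>i. sym2_act g (Q i)) = (\<lambda>i. sym2_matrix g *v phi l (e, Q) i)"
  by (auto simp: phi_def sym2_matrix_mult sq_vec_mult)

lemma inv_SO3_comp_phi:
  assumes "f \<in> inv_SO3 l"
  shows "f \<circ> phi l \<in> inv_SL2 l"
proof -
  have "f \<in> pfun (coords_V l)" and inv: "\<And>M v. M \<in> SO3 \<Longrightarrow> f (\<lambda>i. M *v v i) = f v"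
    using assms unfolding inv_SO3_def by auto
  from this(1) have "(\<lambda>x. f (phi l x)) \<in> pfun (coords_W l)" by (rule pfun_comp_phi)
  moreover have "f (phi l (g *v e, \<lambda>i. sym2_act g (Q i))) = f (phi l (e, Q))" if "g \<in> SL2" for g e Q
    using inv[OF sym2_matrix_in_SO3[OF that]] by (simp add: phi_mult_sym2)
  ultimately show ?thesis unfolding inv_SL2_def comp_def by auto
qed

section \<open>The kernel of the pullback is generated by \<open>d\<close>\<close>

lemma pfun_dlast: "dlast l \<in> pfun (coords_V l)"
proof -
  have "dlast l = (\<lambda>v. (v l $ 1) ^ 2 - 4 * (v l $ 0 * v l $ 2))"
    by (auto simp: dlast_def Qform_def)
  also have "\<dots> \<in> pfun (coords_V l)"
    by (intro pfun_diff pfun_power pfun_cmult pf_mult coords_V_pfun) auto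
  finally show ?thesis .
qed

text \<open>All coordinates but the middle one \<open>b\<close> of \<open>v\<^sub>l = (a, b, c)\<close>: as \<open>d = b\<^sup>2 - 4 a c\<close> is monic in \<open>b\<close>,
  every polynomial function is \<open>R\<^sub>0 + b R\<^sub>1\<close> modulo \<open>d\<close>, with \<open>R\<^sub>0, R\<^sub>1\<close> free of \<open>b\<close>.\<close>

definition coords_V_nomid :: "nat \<Rightarrow> ((nat \<Rightarrow> 'k ^ 3) \<Rightarrow> 'k) set" where
  "coords_V_nomid l = {(\<lambda>v. v i $ j) | i j. i \<le> l \<and> (i \<noteq> l \<or> j \<noteq> 1)}"

lemma coords_V_nomid_subset: "coords_V_nomid l \<subseteq> coords_V l"
  unfolding coords_V_nomid_def coords_V_def by blast

lemma coords_V_nomid_pfun: "i \<le> l \<Longrightarrow> i \<noteq> l \<or> j \<noteq> 1 \<Longrightarrow> (\<lambda>v. v i $ j) \<in> pfun (coords_V_nomid l)"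
  by (rule pf_coord) (auto simp: coords_V_nomid_def)

definition has_dlast_division :: "nat \<Rightarrow> ((nat \<Rightarrow> 'k::comm_ring_1 ^ 3) \<Rightarrow> 'k) \<Rightarrow> bool" where
  "has_dlast_division l f \<longleftrightarrow> (\<exists>R0 R1 H.
     R0 \<in> pfun (coords_V_nomid l) \<and> R1 \<in> pfun (coords_V_nomid l) \<and> H \<in> pfun (coords_V l) \<and>
     (\<forall>v. f v = R0 v + v l $ 1 * R1 v + dlast l v * H v))"

lemma has_dlast_division_add:
  assumes "has_dlast_division l f" "has_dlast_division l g"
  shows "has_dlast_division l (\<lambda>v. f v + g v)"
proof -
  obtain R0 R1 H S0 S1 K where
    R: "R0 \<in> pfun (coords_V_nomid l)" "R1 \<in> pfun (coords_V_nomid l)" "H \<in> pfun (coords_V l)"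
      "\<And>v. f v = R0 v + v l $ 1 * R1 v + dlast l v * H v"
    and S: "S0 \<in> pfun (coords_V_nomid l)" "S1 \<in> pfun (coords_V_nomid l)" "K \<in> pfun (coords_V l)"
      "\<And>v. g v = S0 v + v l $ 1 * S1 v + dlast l v * K v"
    using assms unfolding has_dlast_division_def by metis
  have "f v + g v = (R0 v + S0 v) + v l $ 1 * (R1 v + S1 v) + dlast l v * (H v + K v)" for v
    unfolding R(4) S(4) by (simp add: algebra_simps)
  with R S show ?thesis unfolding has_dlast_division_def by (blast intro: pf_add)
qed

lemma has_dlast_division_mult:
  assumes "has_dlast_division l f" "has_dlast_division l g"
  shows "has_dlast_division l (\<lambda>v. f v * g v)"
proof -
  obtain R0 R1 H S0 S1 K where
    R: "R0 \<in> pfun (coords_V_nomid l)" "R1 \<in> pfun (coords_V_nomid l)" "H \<in> pfun (coords_V l)"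
      "\<And>v. f v = R0 v + v l $ 1 * R1 v + dlast l v * H v"
    and S: "S0 \<in> pfun (coords_V_nomid l)" "S1 \<in> pfun (coords_V_nomid l)" "K \<in> pfun (coords_V l)"
      "\<And>v. g v = S0 v + v l $ 1 * S1 v + dlast l v * K v"
    using assms unfolding has_dlast_division_def by metis
  have ac: "(\<lambda>v. v l $ 0 * v l $ 2) \<in> pfun (coords_V_nomid l)"
    by (intro pf_mult coords_V_nomid_pfun) auto
  have R': "R0 \<in> pfun (coords_V l)" "R1 \<in> pfun (coords_V l)" "S0 \<in> pfun (coords_V l)" "S1 \<in> pfun (coords_V l)"
    using R S pfun_mono[OF coords_V_nomid_subset] by auto
  have b: "(\<lambda>v. v l $ 1) \<in> pfun (coords_V l)" by (auto intro: coords_V_pfun)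
  have "(\<lambda>v. S0 v + v l $ 1 * S1 v + dlast l v * K v) \<in> pfun (coords_V l)"
    using R' S(3) b pfun_dlast by (intro pf_add pf_mult) auto
  then have "(\<lambda>v. R1 v * S1 v + H v * g v + (R0 v + v l $ 1 * R1 v) * K v) \<in> pfun (coords_V l)"
    using R(3) S(3) R' b pfun_dlast unfolding S(4) by (intro pf_add pf_mult) auto
  moreover have "f v * g v = (R0 v * S0 v + 4 * (v l $ 0 * v l $ 2) * (R1 v * S1 v))
      + v l $ 1 * (R0 v * S1 v + R1 v * S0 v)
      + dlast l v * (R1 v * S1 v + H v * g v + (R0 v + v l $ 1 * R1 v) * K v)" for v
    unfolding R(4)[of v] S(4)[of v] dlast_def Qform_def by (simp add: algebra_simps power2_eq_square)
  moreover have "(\<lambda>v. R0 v * S0 v + 4 * (v l $ 0 * v l $ 2) * (R1 v * S1 v)) \<in> pfun (coords_V_nomid l)"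
    by (rule pf_add[OF pf_mult[OF R(1) S(1)] pf_mult[OF pfun_cmult[OF ac] pf_mult[OF R(2) S(2)]]])
  moreover have "(\<lambda>v. R0 v * S1 v + R1 v * S0 v) \<in> pfun (coords_V_nomid l)"
    by (rule pf_add[OF pf_mult[OF R(1) S(2)] pf_mult[OF R(2) S(1)]])
  ultimately show ?thesis unfolding has_dlast_division_def by blast
qed

lemma pfun_has_dlast_division:
  assumes "f \<in> pfun (coords_V l)"
  shows "has_dlast_division l (f :: (nat \<Rightarrow> 'k::comm_ring_1 ^ 3) \<Rightarrow> 'k)"
  using assms
proof induction
  case (pf_const c)
  show ?case unfolding has_dlast_division_def
    by (rule exI[of _ "\<lambda>_. c"], rule exI[of _ "\<lambda>_. 0"], rule exI[of _ "\<lambda>_. 0"]) (auto intro: pfun.pf_const)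
next
  case (pf_coord x)
  then obtain i j where x: "x = (\<lambda>v. v i $ j)" "i \<le> l" unfolding coords_V_def by blast
  show ?case
  proof (cases "i = l \<and> j = 1")
    case True
    show ?thesis unfolding has_dlast_division_def
      by (rule exI[of _ "\<lambda>_. 0"], rule exI[of _ "\<lambda>_. 1"], rule exI[of _ "\<lambda>_. 0"])
        (auto intro: pfun.pf_const simp: x True)
  next
    case False
    show ?thesis unfolding has_dlast_division_def
      by (rule exI[of _ x], rule exI[of _ "\<lambda>_. 0"], rule exI[of _ "\<lambda>_. 0"])
        (use False x in \<open>auto intro: pfun.pf_const coords_V_nomid_pfun\<close>)
  qed
next
  case (pf_add f g)
  from pf_add.IH show ?case by (rule has_dlast_division_add)
next
  case (pf_mult f g)
  from pf_mult.IH show ?case by (rule has_dlast_division_mult)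
qed

definition coord_upd :: "(nat \<Rightarrow> 'k ^ 3) \<Rightarrow> nat \<Rightarrow> 3 \<Rightarrow> 'k \<Rightarrow> nat \<Rightarrow> 'k ^ 3" where
  "coord_upd v i0 j0 t = v(i0 := (\<chi> j. if j = j0 then t else v i0 $ j))"

lemma coord_upd_nth: "coord_upd v i0 j0 t i $ j = (if i = i0 \<and> j = j0 then t else v i $ j)"
  by (simp add: coord_upd_def)

lemma coord_upd_same: "coord_upd v i0 j0 (v i0 $ j0) = v"
  by (auto simp: fun_eq_iff vec_eq_iff coord_upd_nth)

lemma pfun_coord_upd_poly:
  assumes "f \<in> pfun (coords_V l)"
  shows "\<exists>p. \<forall>t. f (coord_upd v i0 j0 t) = poly p t"
proof (rule pfun_along_curve_is_poly[OF assms])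
  fix c :: "(nat \<Rightarrow> 'a ^ 3) \<Rightarrow> 'a" assume "c \<in> coords_V l"
  then obtain i j where c: "c = (\<lambda>v. v i $ j)" unfolding coords_V_def by blast
  show "\<exists>p. \<forall>t. c (coord_upd v i0 j0 t) = poly p t"
  proof (cases "i = i0 \<and> j = j0")
    case True
    then show ?thesis by (intro exI[of _ "[:0, 1:]"]) (simp add: c coord_upd_nth)
  next
    case False
    then show ?thesis by (intro exI[of _ "[:v i $ j:]"]) (auto simp: c coord_upd_nth)
  qed
qed

lemma pfun_eq_0_if_eq_0_on_line:
  fixes f :: "(nat \<Rightarrow> 'k::{idom, ring_char_0} ^ 3) \<Rightarrow> 'k"
  assumes "f \<in> pfun (coords_V l)" "finite S" "\<And>t. t \<notin> S \<Longrightarrow> f (coord_upd v i j t) = 0"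
  shows "f v = 0"
proof -
  obtain p where p: "\<And>t. f (coord_upd v i j t) = poly p t"
    using pfun_coord_upd_poly[OF assms(1)] by blast
  have "p = 0" using poly_eq_0_if_roots_cofinite[OF assms(2)] assms(3) by (metis p)
  then show ?thesis using p[of "v i $ j"] by (simp add: coord_upd_same)
qed

lemma pfun_nomid_coord_upd: "R \<in> pfun (coords_V_nomid l) \<Longrightarrow> R (coord_upd v l 1 t) = R v"
  by (erule pfun_eq_if_coords_eq) (auto simp: coords_V_nomid_def coord_upd_nth)

lemma nomid_remainder_pointwise:
  fixes R0 R1 :: "(nat \<Rightarrow> 'k::field_char_0 ^ 3) \<Rightarrow> 'k"
  assumes ac: "alg_closed TYPE('k)"
    and R: "R0 \<in> pfun (coords_V_nomid l)" "R1 \<in> pfun (coords_V_nomid l)"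
    and van: "\<And>v. dlast l v = 0 \<Longrightarrow> R0 v + v l $ 1 * R1 v = 0"
  shows "R0 v = 0 \<and> (\<forall>s. s\<^sup>2 = v l $ 0 * v l $ 2 \<longrightarrow> s * R1 v = 0)"
proof -
  have root: "R0 v + u * R1 v = 0" if "u\<^sup>2 = 4 * (v l $ 0 * v l $ 2)" for u
    using van[of "coord_upd v l 1 u"] that
    by (simp add: dlast_def Qform_def coord_upd_nth pfun_nomid_coord_upd[OF R(1)]
        pfun_nomid_coord_upd[OF R(2)])
  obtain s where s: "s\<^sup>2 = v l $ 0 * v l $ 2" using alg_closed_square_root[OF ac] by blast
  have "R0 v + 2 * s * R1 v = 0" "R0 v - 2 * s * R1 v = 0"
    using root[of "2 * s"] root[of "- 2 * s"] s by (simp_all add: power_mult_distrib)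
  then have "R0 v = 0" by (simp add: algebra_simps)
  moreover have "s' * R1 v = 0" if "s'\<^sup>2 = v l $ 0 * v l $ 2" for s'
    using root[of "2 * s'"] that \<open>R0 v = 0\<close> by (simp add: power_mult_distrib)
  ultimately show ?thesis by blast
qed

lemma nomid_remainder_eq_0:
  fixes R0 R1 :: "(nat \<Rightarrow> 'k::field_char_0 ^ 3) \<Rightarrow> 'k"
  assumes ac: "alg_closed TYPE('k)"
    and R: "R0 \<in> pfun (coords_V_nomid l)" "R1 \<in> pfun (coords_V_nomid l)"
    and van: "\<And>v. dlast l v = 0 \<Longrightarrow> R0 v + v l $ 1 * R1 v = 0"
  shows "R0 v = 0" "R1 v = 0"
proof -
  note pointwise = nomid_remainder_pointwise[OF ac R van]
  note R1_pfun = pfun_mono[OF coords_V_nomid_subset R(2)]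
  have R1_eq_0: "R1 w = 0" if "w l $ 2 \<noteq> 0" for w
  proof (rule pfun_eq_0_if_eq_0_on_line[OF R1_pfun, of "{0}" w l 0])
    fix t :: 'k assume "t \<notin> {0}"
    obtain s where s: "s\<^sup>2 = t * w l $ 2" using alg_closed_square_root[OF ac] by blast
    with \<open>t \<notin> {0}\<close> that have "s \<noteq> 0" by auto
    with pointwise[of "coord_upd w l 0 t"] s show "R1 (coord_upd w l 0 t) = 0"
      by (auto simp: coord_upd_nth)
  qed simp
  show "R1 v = 0"
    by (rule pfun_eq_0_if_eq_0_on_line[OF R1_pfun, of "{0}" v l 2]) (simp_all add: R1_eq_0 coord_upd_nth)
  show "R0 v = 0" using pointwise by blast
qed

lemma pfun_dvd_dlast:
  fixes f :: "(nat \<Rightarrow> 'k::field_char_0 ^ 3) \<Rightarrow> 'k"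
  assumes "alg_closed TYPE('k)" "f \<in> pfun (coords_V l)" "\<And>v. dlast l v = 0 \<Longrightarrow> f v = 0"
  obtains H where "H \<in> pfun (coords_V l)" "f = (\<lambda>v. dlast l v * H v)"
proof -
  obtain R0 R1 H where R: "R0 \<in> pfun (coords_V_nomid l)" "R1 \<in> pfun (coords_V_nomid l)"
    "H \<in> pfun (coords_V l)" "\<And>v. f v = R0 v + v l $ 1 * R1 v + dlast l v * H v"
    using pfun_has_dlast_division[OF assms(2)] unfolding has_dlast_division_def by metis
  have "\<And>v. dlast l v = 0 \<Longrightarrow> R0 v + v l $ 1 * R1 v = 0"
    using assms(3) R(4) by fastforce
  with nomid_remainder_eq_0[OF assms(1) R(1,2)] have "f = (\<lambda>v. dlast l v * H v)"
    by (simp add: fun_eq_iff R(4))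
  with R(3) show ?thesis by (rule that)
qed

lemma pfun_eq_0_if_dlast_nonzero:
  fixes K :: "(nat \<Rightarrow> 'k::field_char_0 ^ 3) \<Rightarrow> 'k"
  assumes "K \<in> pfun (coords_V l)" "\<And>v. dlast l v \<noteq> 0 \<Longrightarrow> K v = 0"
  shows "K v = 0"
proof (rule pfun_eq_0_if_eq_0_on_line[OF assms(1)])
  let ?d = "[:- 4 * (v l $ 0 * v l $ 2), 0, 1:]"
  show "finite {t. poly ?d t = 0}" by (rule poly_roots_finite) simp
  fix t assume "t \<notin> {t. poly ?d t = 0}"
  then have "dlast l (coord_upd v l 1 t) \<noteq> 0"
    by (simp add: dlast_def Qform_def coord_upd_nth power2_eq_square algebra_simps)
  then show "K (coord_upd v l 1 t) = 0" by (rule assms(2))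
qed

lemma pfun_mult_vec:
  assumes "f \<in> pfun (coords_V l)"
  shows "(\<lambda>v. f (\<lambda>i. M *v v i)) \<in> pfun (coords_V l)"
proof (rule pfun_compose[OF assms])
  fix c :: "(nat \<Rightarrow> 'a ^ 3) \<Rightarrow> 'a" assume "c \<in> coords_V l"
  then obtain i j where c: "c = (\<lambda>v. v i $ j)" "i \<le> l" unfolding coords_V_def by blast
  have "(\<lambda>v. \<Sum>k\<in>UNIV. M $ j $ k * v i $ k) \<in> pfun (coords_V l)"
    by (intro pfun_sum pfun_cmult coords_V_pfun c(2)) auto
  then show "(\<lambda>v. c (\<lambda>i. M *v v i)) \<in> pfun (coords_V l)"
    by (simp add: c matrix_vector_mult_def)
qed

lemma dlast_mult_vec_SO3: "M \<in> SO3 \<Longrightarrow> dlast l (\<lambda>i. M *v v i) = dlast l v"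
  unfolding SO3_def dlast_def by auto

lemma inv_SO3_dlast_cancel:
  fixes H :: "(nat \<Rightarrow> 'k::field_char_0 ^ 3) \<Rightarrow> 'k"
  assumes "H \<in> pfun (coords_V l)" "(\<lambda>v. dlast l v * H v) \<in> inv_SO3 l"
  shows "H \<in> inv_SO3 l"
proof -
  have "H (\<lambda>i. M *v v i) - H v = 0" if M: "M \<in> SO3" for M v
  proof (rule pfun_eq_0_if_dlast_nonzero[where K = "\<lambda>v. H (\<lambda>i. M *v v i) - H v"])
    show "(\<lambda>v. H (\<lambda>i. M *v v i) - H v) \<in> pfun (coords_V l)"
      by (intro pfun_diff pfun_mult_vec assms(1))
    fix w :: "nat \<Rightarrow> 'k ^ 3" assume "dlast l w \<noteq> 0"
    moreover have "dlast l (\<lambda>i. M *v w i) * H (\<lambda>i. M *v w i) = dlast l w * H w"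
      using assms(2) M unfolding inv_SO3_def by blast
    then have "dlast l w * H (\<lambda>i. M *v w i) = dlast l w * H w"
      by (simp add: dlast_mult_vec_SO3[OF M])
    ultimately show "H (\<lambda>i. M *v w i) - H w = 0" by simp
  qed
  with assms(1) show ?thesis unfolding inv_SO3_def by auto
qed

lemma inv_SO3_kernel:
  fixes f :: "(nat \<Rightarrow> 'k::field_char_0 ^ 3) \<Rightarrow> 'k"
  assumes ac: "alg_closed TYPE('k)" and f: "f \<in> inv_SO3 l" and "f \<circ> phi l = (\<lambda>_. 0)"
  shows "\<exists>h\<in>inv_SO3 l. f = (\<lambda>v. dlast l v * h v)"
proof -
  have fp: "f \<in> pfun (coords_V l)" using f unfolding inv_SO3_def by auto
  have "f v = 0" if d: "dlast l v = 0" for v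
  proof -
    obtain e where e: "v l = sq_vec e"
      using isotropic_eq_sq_vec[OF ac, of "v l"] d unfolding dlast_def by blast
    have "f v = f (phi l (e, \<lambda>i. v (i - 1)))"
      by (rule pfun_eq_if_coords_eq[OF fp]) (auto simp: coords_V_def phi_def e)
    then show ?thesis using \<open>f \<circ> phi l = (\<lambda>_. 0)\<close> by (metis comp_apply)
  qed
  then obtain H where H: "H \<in> pfun (coords_V l)" "f = (\<lambda>v. dlast l v * H v)"
    using pfun_dvd_dlast[OF ac fp] by blast
  with f have "H \<in> inv_SO3 l" by (simp add: inv_SO3_dlast_cancel)
  with H(2) show ?thesis by blast
qed

lemma dlast_mult_comp_phi: "(\<lambda>v. dlast l v * h v) \<circ> phi l = (\<lambda>_. 0)"
  by (auto simp: fun_eq_iff dlast_def phi_def Qform_sq_vec)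

section \<open>Every invariant of \<open>SL\<^sub>2\<close> is a pullback\<close>

definition coords_Q :: "nat \<Rightarrow> ((nat \<Rightarrow> 'k ^ 3) \<Rightarrow> 'k) set" where
  "coords_Q l = {(\<lambda>Q. Q i $ j) | i j. 1 \<le> i \<and> i \<le> l}"

definition has_homog_expansion ::
  "('b \<Rightarrow> 'k::comm_ring_1) set \<Rightarrow> (('k ^ 2) \<times> 'b \<Rightarrow> 'k) \<Rightarrow> nat \<Rightarrow> (nat \<Rightarrow> 'b \<Rightarrow> 'k poly) \<Rightarrow> bool"
  where
  "has_homog_expansion C F N P \<longleftrightarrow>
     (\<forall>n j. (\<lambda>Q. coeff (P n Q) j) \<in> pfun C) \<and> (\<forall>n Q. degree (P n Q) \<le> n) \<and>
     (\<forall>n Q. N < n \<longrightarrow> P n Q = 0) \<and> (\<forall>e Q. F (e, Q) = (\<Sum>n\<le>N. homog_eval n (P n Q) e))"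

lemma has_homog_expansion_mono:
  assumes "has_homog_expansion C F N P" "N \<le> N'"
  shows "has_homog_expansion C F N' P"
proof -
  have "(\<Sum>n\<le>N. homog_eval n (P n Q) e) = (\<Sum>n\<le>N'. homog_eval n (P n Q) e)" for e Q
    by (rule sum.mono_neutral_left) (use assms in \<open>auto simp: has_homog_expansion_def\<close>)
  with assms show ?thesis unfolding has_homog_expansion_def by auto
qed

lemma has_homog_expansion_const:
  "has_homog_expansion C (\<lambda>_. c) 0 (\<lambda>n Q. if n = 0 then [:c:] else 0)"
  unfolding has_homog_expansion_def
  by (intro conjI allI impI pf_const) (simp_all add: homog_eval_const)

lemma has_homog_expansion_fst:
  fixes C :: "('b \<Rightarrow> 'k::comm_ring_1) set"
  shows "has_homog_expansion C (\<lambda>x. fst x $ j) 1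
     (\<lambda>n Q. if n = 1 then [:of_bool (j = 0), of_bool (j = 1):] else 0)"
proof -
  define p :: "'k poly" where "p = [:of_bool (j = 0), of_bool (j = 1):]"
  have "j = 0 \<or> j = 1" using exhaust_2[of j] by auto
  then have "e $ j = homog_eval 1 p e" for e
    by (auto simp: p_def homog_eval_def)
  moreover have "degree p \<le> 1" by (simp add: p_def)
  ultimately show ?thesis
    unfolding has_homog_expansion_def p_def[symmetric] by (intro conjI allI impI pf_const) simp_all
qed

lemma has_homog_expansion_snd:
  assumes "c \<in> C"
  shows "has_homog_expansion C (\<lambda>x. c (snd x)) 0 (\<lambda>n Q. if n = 0 then [:c Q:] else 0)"
proof -
  have coeffs: "(\<lambda>Q. coeff (if n = 0 then [:c Q:] else 0) j) \<in> pfun C" for n j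
  proof (cases "n = 0 \<and> j = 0")
    case True
    then show ?thesis using pf_coord[OF assms] by simp
  next
    case False
    then have "(\<lambda>Q. coeff (if n = 0 then [:c Q:] else 0) j) = (\<lambda>_. 0)"
      by (auto simp: coeff_pCons split: nat.split)
    then show ?thesis by (simp add: pf_const)
  qed
  show ?thesis
    unfolding has_homog_expansion_def by (intro conjI allI impI coeffs) (simp_all add: homog_eval_const)
qed

lemma has_homog_expansion_add:
  assumes "has_homog_expansion C F N P" "has_homog_expansion C G M R"
  shows "has_homog_expansion C (\<lambda>x. F x + G x) (max N M) (\<lambda>n Q. P n Q + R n Q)"
proof -
  have "has_homog_expansion C F (max N M) P" "has_homog_expansion C G (max N M) R"
    using assms by (auto intro: has_homog_expansion_mono)
  then show ?thesis
    unfolding has_homog_expansion_def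
    by (auto intro: pf_add degree_add_le simp: homog_eval_add sum.distrib)
qed

lemma sum_atMost_product_diagonal:
  fixes h :: "nat \<Rightarrow> nat \<Rightarrow> 'a::comm_monoid_add"
  assumes "\<And>a b. N < a \<Longrightarrow> h a b = 0" "\<And>a b. M < b \<Longrightarrow> h a b = 0"
  shows "(\<Sum>a\<le>N. \<Sum>b\<le>M. h a b) = (\<Sum>n\<le>N + M. \<Sum>a\<le>n. h a (n - a))"
proof -
  have "(\<Sum>a\<le>N. \<Sum>b\<le>M. h a b) = (\<Sum>(a, b)\<in>{..N} \<times> {..M}. h a b)"
    by (simp add: sum.cartesian_product)
  also have "\<dots> = (\<Sum>(a, b)\<in>{(a, b). a + b \<le> N + M}. h a b)"
  proof (rule sum.mono_neutral_left)
    have "{(a, b). a + b \<le> N + M} \<subseteq> {..N + M} \<times> {..N + M}" by auto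
    then show "finite {(a, b). a + b \<le> N + M}" by (rule finite_subset) auto
    show "\<forall>i\<in>{(a, b). a + b \<le> N + M} - {..N} \<times> {..M}. (case i of (a, b) \<Rightarrow> h a b) = 0"
      using assms by (auto simp: not_le) (metis not_le)+
  qed auto
  also have "\<dots> = (\<Sum>n\<le>N + M. \<Sum>a\<le>n. h a (n - a))" by (rule sum.triangle_reindex_eq)
  finally show ?thesis .
qed

lemma has_homog_expansion_mult:
  fixes P R :: "nat \<Rightarrow> 'b \<Rightarrow> 'k::field poly"
  assumes P: "has_homog_expansion C F N P" and R: "has_homog_expansion C G M R"
  shows "has_homog_expansion C (\<lambda>x. F x * G x) (N + M) (\<lambda>n Q. \<Sum>a\<le>n. P a Q * R (n - a) Q)"
proof -
  have deg: "degree (P a Q) \<le> a" "degree (R b Q) \<le> b" for a b Q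
    using P R unfolding has_homog_expansion_def by auto
  have van: "P a Q = 0" if "N < a" for a Q
    using P that unfolding has_homog_expansion_def by auto
  have van': "R b Q = 0" if "M < b" for b Q
    using R that unfolding has_homog_expansion_def by auto
  have "(\<lambda>Q. coeff (\<Sum>a\<le>n. P a Q * R (n - a) Q) j) \<in> pfun C" for n j
    unfolding coeff_sum coeff_mult
    using P R unfolding has_homog_expansion_def by (intro pfun_sum pf_mult) auto
  moreover have "degree (\<Sum>a\<le>n. P a Q * R (n - a) Q) \<le> n" for n Q
  proof (rule degree_sum_le)
    fix a assume "a \<in> {..n}"
    then show "degree (P a Q * R (n - a) Q) \<le> n"
      using degree_mult_le[of "P a Q" "R (n - a) Q"] deg(1)[of a Q] deg(2)[of "n - a" Q] by simp
  qed simp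
  moreover have "(\<Sum>a\<le>n. P a Q * R (n - a) Q) = 0" if "N + M < n" for n Q
  proof (rule sum.neutral, intro ballI)
    fix a assume "a \<in> {..n}"
    with that have "N < a \<or> M < n - a" by auto
    then show "P a Q * R (n - a) Q = 0" using van van' by auto
  qed
  moreover have "F (e, Q) * G (e, Q) = (\<Sum>n\<le>N + M. homog_eval n (\<Sum>a\<le>n. P a Q * R (n - a) Q) e)"
    for e Q
  proof -
    have "F (e, Q) * G (e, Q) = (\<Sum>a\<le>N. \<Sum>b\<le>M. homog_eval a (P a Q) e * homog_eval b (R b Q) e)"
      using P R unfolding has_homog_expansion_def by (simp add: sum_product)
    also have "\<dots> = (\<Sum>a\<le>N. \<Sum>b\<le>M. homog_eval (a + b) (P a Q * R b Q) e)"
      by (simp add: homog_eval_mult deg)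
    also have "\<dots> = (\<Sum>n\<le>N + M. \<Sum>a\<le>n. homog_eval (a + (n - a)) (P a Q * R (n - a) Q) e)"
      by (rule sum_atMost_product_diagonal) (simp_all add: van van')
    also have "\<dots> = (\<Sum>n\<le>N + M. homog_eval n (\<Sum>a\<le>n. P a Q * R (n - a) Q) e)"
      by (simp add: homog_eval_sum)
    finally show ?thesis .
  qed
  ultimately show ?thesis unfolding has_homog_expansion_def by blast
qed

lemma pfun_coords_W_homog_expansion:
  fixes F :: "('k::field ^ 2) \<times> (nat \<Rightarrow> 'k ^ 3) \<Rightarrow> 'k"
  assumes "F \<in> pfun (coords_W l)"
  shows "\<exists>N P. has_homog_expansion (coords_Q l) F N P"
  using assms
proof induction
  case (pf_const c)
  show ?case using has_homog_expansion_const by blast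
next
  case (pf_coord x)
  then consider j where "x = (\<lambda>x. fst x $ j)"
    | i j where "x = (\<lambda>x. (\<lambda>Q. Q i $ j) (snd x))" "1 \<le> i" "i \<le> l"
    unfolding coords_W_def by (auto simp: case_prod_beta')
  then show ?case
  proof cases
    case 1
    then show ?thesis using has_homog_expansion_fst by blast
  next
    case 2
    then have "(\<lambda>Q. Q i $ j) \<in> coords_Q l" unfolding coords_Q_def by blast
    with 2 show ?thesis using has_homog_expansion_snd by blast
  qed
next
  case (pf_add f g)
  then show ?case using has_homog_expansion_add by blast
next
  case (pf_mult f g)
  then show ?case using has_homog_expansion_mult by blast
qed

lemma inv_SL2_homog_component:
  fixes P :: "nat \<Rightarrow> (nat \<Rightarrow> 'k::field_char_0 ^ 3) \<Rightarrow> 'k poly"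
  assumes "F \<in> inv_SL2 l" "has_homog_expansion C F N P" "g \<in> SL2"
  shows "homog_eval n (P n (\<lambda>i. sym2_act g (Q i))) (g *v e) = homog_eval n (P n Q) e"
proof (cases "n \<le> N")
  case True
  have "F (g *v (t *s e), \<lambda>i. sym2_act g (Q i)) = F (t *s e, Q)" for t
    using assms(1,3) unfolding inv_SL2_def by blast
  then have "F (t *s (g *v e), \<lambda>i. sym2_act g (Q i)) = F (t *s e, Q)" for t
    by (simp add: vector_scalar_commute)
  moreover have "F (u, Q') = (\<Sum>n\<le>N. homog_eval n (P n Q') u)" for u Q'
    using assms(2) unfolding has_homog_expansion_def by blast
  ultimately show ?thesis by (intro homog_components_eq[OF _ True]) simp
next
  case False
  then show ?thesis using assms(2) unfolding has_homog_expansion_def by simp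
qed

lemma mat_neg_one_in_SL2: "(mat (-1) :: 'k::comm_ring_1 ^ 2 ^ 2) \<in> SL2"
  by (simp add: SL2_def det_2 mat_def)

lemma inv_SL2_odd_homog_component:
  fixes P :: "nat \<Rightarrow> (nat \<Rightarrow> 'k::field_char_0 ^ 3) \<Rightarrow> 'k poly"
  assumes "F \<in> inv_SL2 l" "has_homog_expansion C F N P" "odd n"
  shows "homog_eval n (P n Q) e = 0"
proof (rule homog_eval_odd_eq_0[OF _ assms(3)])
  have "sym2_act (mat (-1)) w = w" for w :: "'k ^ 3"
    by (simp add: vec_eq_iff forall_3 sym2_act_def mat_def)
  moreover have "mat (-1) *v e = (-1) *s e"
    by (simp add: vec_eq_iff forall_2 mult_vec2_nth mat_def)
  ultimately show "homog_eval n (P n Q) ((-1) *s e) = homog_eval n (P n Q) e"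
    using inv_SL2_homog_component[OF assms(1,2) mat_neg_one_in_SL2, of n Q e] by simp
qed

definition quad_poly :: "'k::zero ^ 3 \<Rightarrow> 'k poly" where
  "quad_poly w = [:w$0, w$1, w$2:]"

lemma degree_quad_poly: "degree (quad_poly w) \<le> 2"
  by (simp add: quad_poly_def)

lemma quad_poly_sq_vec: "quad_poly (sq_vec e) = [:e$0, e$1:] ^ 2"
  by (simp add: quad_poly_def sq_vec_def power2_eq_square mult_pCons_left algebra_simps)

lemma form_act_quad_poly:
  fixes g :: "'k::field_char_0 ^ 2 ^ 2"
  shows "form_act 2 g (quad_poly w) = quad_poly (sym2_act g w)"
proof (rule homog_eval_inject[OF degree_form_act degree_quad_poly])
  have quad: "homog_eval 2 (quad_poly w) u = w$0 * (u$0)\<^sup>2 + w$1 * u$0 * u$1 + w$2 * (u$1)\<^sup>2"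
    for w :: "'k ^ 3" and u
    by (simp add: homog_eval_def quad_poly_def numeral_2_eq_2 power2_eq_square)
  show "homog_eval 2 (form_act 2 g (quad_poly w)) u = homog_eval 2 (quad_poly (sym2_act g w)) u" for u
    unfolding homog_eval_form_act quad vec2_mult_nth
    by (simp add: sym2_act_def power2_eq_square algebra_simps)
qed

lemma pfun_coeff_quad_poly:
  "(\<lambda>v :: nat \<Rightarrow> 'k::comm_ring_1 ^ 3. coeff (quad_poly (v l)) i) \<in> pfun (coords_V l)"
proof -
  consider "i = 0" | "i = 1" | "i = 2" | "2 < i" by linarith
  then show ?thesis
  proof cases
    case 4
    have "degree (quad_poly (v l)) < i" for v :: "nat \<Rightarrow> 'k ^ 3"
      using degree_quad_poly 4 by (rule le_less_trans)
    then have "(\<lambda>v :: nat \<Rightarrow> 'k ^ 3. coeff (quad_poly (v l)) i) = (\<lambda>_. 0)"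
      by (intro ext coeff_eq_0)
    then show ?thesis by (simp add: pf_const)
  qed (simp_all add: quad_poly_def numeral_2_eq_2 coords_V_pfun)
qed

lemma pfun_coeff_power:
  assumes "\<And>i. (\<lambda>v. coeff (p v) i) \<in> pfun C"
  shows "(\<lambda>v. coeff (p v ^ k) j) \<in> pfun C"
proof (induction k arbitrary: j)
  case 0
  show ?case by (simp add: pf_const)
next
  case (Suc k)
  have "(\<lambda>v. \<Sum>i\<le>j. coeff (p v) i * coeff (p v ^ k) (j - i)) \<in> pfun C"
    by (intro pfun_sum pf_mult assms Suc.IH) simp
  then show ?case by (simp add: coeff_mult)
qed

text \<open>The preimage of \<open>F\<close>: \<open>e\<close> enters only through \<open>v\<^sub>l = e\<^sup>2\<close>, so the component of degree \<open>2k\<close>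
  is paired apolarly with \<open>v\<^sub>l\<^sup>k\<close>, which is \<open>e\<^bsup>2k\<^esup>\<close> on the image of \<open>\<phi>\<close>; the shift of indices
  undoes \<open>Q\<^sub>i \<mapsto> v\<^sub>i\<^sub>-\<^sub>1\<close>.\<close>

definition pullback_preimage :: "nat \<Rightarrow> nat \<Rightarrow> (nat \<Rightarrow> (nat \<Rightarrow> 'k ^ 3) \<Rightarrow> 'k poly)
    \<Rightarrow> (nat \<Rightarrow> 'k::field ^ 3) \<Rightarrow> 'k" where
  "pullback_preimage l N P v =
     (\<Sum>k\<le>N. apolar (2 * k) (P (2 * k) (\<lambda>i. v (i - 1))) (quad_poly (v l) ^ k))"

lemma pfun_pullback_preimage:
  assumes "has_homog_expansion (coords_Q l) F N P"
  shows "pullback_preimage l N P \<in> pfun (coords_V l)"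
proof -
  have "(\<lambda>v. coeff (P n (\<lambda>i. v (i - 1))) j) \<in> pfun (coords_V l)" for n j
  proof (rule pfun_compose[of "\<lambda>Q. coeff (P n Q) j" "coords_Q l"])
    show "(\<lambda>Q. coeff (P n Q) j) \<in> pfun (coords_Q l)"
      using assms unfolding has_homog_expansion_def by blast
  next
    fix c :: "(nat \<Rightarrow> 'a ^ 3) \<Rightarrow> 'a" assume "c \<in> coords_Q l"
    then obtain i j' where "c = (\<lambda>Q. Q i $ j')" "i \<le> l" unfolding coords_Q_def by blast
    then show "(\<lambda>v. c (\<lambda>i. v (i - 1))) \<in> pfun (coords_V l)" by (simp add: coords_V_pfun)
  qed
  then show ?thesis
    unfolding pullback_preimage_def apolar_def
    by (intro pfun_sum pf_mult pfun_cmult pfun_coeff_power pfun_coeff_quad_poly) simp_all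
qed

lemma pullback_preimage_comp_phi:
  fixes P :: "nat \<Rightarrow> (nat \<Rightarrow> 'k::field_char_0 ^ 3) \<Rightarrow> 'k poly"
  assumes F: "F \<in> inv_SL2 l" and P: "has_homog_expansion (coords_Q l) F N P"
  shows "pullback_preimage l N P (phi l (e, Q)) = F (e, Q)"
proof -
  have shift: "P n (\<lambda>i. phi l (e, Q) (i - 1)) = P n Q" for n
  proof (rule poly_eqI)
    fix j
    show "coeff (P n (\<lambda>i. phi l (e, Q) (i - 1))) j = coeff (P n Q) j"
      by (rule pfun_eq_if_coords_eq[of "\<lambda>Q. coeff (P n Q) j" "coords_Q l"])
        (use P in \<open>auto simp: has_homog_expansion_def coords_Q_def phi_def\<close>)
  qed
  have last: "phi l (e, Q) l = sq_vec e" by (simp add: phi_def)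
  have "pullback_preimage l N P (phi l (e, Q)) = (\<Sum>k\<le>N. homog_eval (2 * k) (P (2 * k) Q) e)"
    by (simp add: pullback_preimage_def shift[simplified] last quad_poly_sq_vec apolar_linear_power
        flip: power_mult)
  also have "\<dots> = (\<Sum>k\<le>N. homog_eval (2 * k) (P (2 * k) Q) e + homog_eval (Suc (2 * k)) (P (Suc (2 * k)) Q) e)"
    using inv_SL2_odd_homog_component[OF F P] by simp
  also have "\<dots> = (\<Sum>n\<le>Suc (2 * N). homog_eval n (P n Q) e)"
    by (rule sum.in_pairs_0[symmetric])
  also have "\<dots> = F (e, Q)"
    using has_homog_expansion_mono[OF P, of "Suc (2 * N)"] by (simp add: has_homog_expansion_def)
  finally show ?thesis .
qed

lemma pullback_preimage_sym2_act:
  fixes P :: "nat \<Rightarrow> (nat \<Rightarrow> 'k::field_char_0 ^ 3) \<Rightarrow> 'k poly"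
  assumes F: "F \<in> inv_SL2 l" and P: "has_homog_expansion (coords_Q l) F N P" and g: "g \<in> SL2"
  shows "pullback_preimage l N P (\<lambda>i. sym2_act g (v i)) = pullback_preimage l N P v"
proof -
  have "apolar (2 * k) (P (2 * k) (\<lambda>i. sym2_act g (v (i - 1)))) (quad_poly (sym2_act g (v l)) ^ k)
      = apolar (2 * k) (P (2 * k) (\<lambda>i. v (i - 1))) (quad_poly (v l) ^ k)" for k
  proof -
    have "quad_poly (sym2_act g (v l)) ^ k = form_act (2 * k) g (quad_poly (v l) ^ k)"
      by (simp add: form_act_power[OF degree_quad_poly] form_act_quad_poly)
    then show ?thesis
      using apolar_form_act[OF inv_SL2_homog_component[OF F P g, of "2 * k" "\<lambda>i. v (i - 1)"]]
      by simp
  qed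
  then show ?thesis by (simp add: pullback_preimage_def)
qed

lemma pullback_preimage_in_inv_SO3:
  fixes P :: "nat \<Rightarrow> (nat \<Rightarrow> 'k::field_char_0 ^ 3) \<Rightarrow> 'k poly"
  assumes ac: "alg_closed TYPE('k)" and F: "F \<in> inv_SL2 l"
    and P: "has_homog_expansion (coords_Q l) F N P"
  shows "pullback_preimage l N P \<in> inv_SO3 l"
proof -
  have "pullback_preimage l N P (\<lambda>i. M *v v i) = pullback_preimage l N P v"
    if "M \<in> SO3" for M v
  proof -
    obtain g where "g \<in> SL2" "M = sym2_matrix g" using SO3_eq_sym2_matrix[OF ac \<open>M \<in> SO3\<close>] .
    then show ?thesis using pullback_preimage_sym2_act[OF F P] by (simp add: sym2_matrix_mult)
  qed
  with pfun_pullback_preimage[OF P] show ?thesis unfolding inv_SO3_def by blast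
qed

lemma inv_SL2_eq_comp_phi:
  fixes F :: "('k::field_char_0 ^ 2) \<times> (nat \<Rightarrow> 'k ^ 3) \<Rightarrow> 'k"
  assumes "alg_closed TYPE('k)" "F \<in> inv_SL2 l"
  shows "\<exists>f\<in>inv_SO3 l. F = f \<circ> phi l"
proof -
  obtain N P where P: "has_homog_expansion (coords_Q l) F N P"
    using pfun_coords_W_homog_expansion assms(2) unfolding inv_SL2_def by blast
  then have "F = pullback_preimage l N P \<circ> phi l"
    using pullback_preimage_comp_phi[OF assms(2)] by (auto simp: fun_eq_iff)
  with pullback_preimage_in_inv_SO3[OF assms P] show ?thesis by blast
qed

theorem lemma3:
  fixes l :: nat
  assumes "alg_closed TYPE('k::field_char_0)"
  shows "(\<forall>f \<in> (inv_SO3 l :: ((nat \<Rightarrow> 'k ^ 3) \<Rightarrow> 'k) set). f \<circ> phi l \<in> inv_SL2 l)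
    \<and> (\<forall>F \<in> (inv_SL2 l :: (('k ^ 2) \<times> (nat \<Rightarrow> 'k ^ 3) \<Rightarrow> 'k) set).
          \<exists>f \<in> inv_SO3 l. F = f \<circ> phi l)
    \<and> (\<forall>f \<in> (inv_SO3 l :: ((nat \<Rightarrow> 'k ^ 3) \<Rightarrow> 'k) set).
          f \<circ> phi l = (\<lambda>_. 0) \<longleftrightarrow> (\<exists>h \<in> inv_SO3 l. f = (\<lambda>v. dlast l v * h v)))"
proof (intro conjI ballI)
  fix f :: "(nat \<Rightarrow> 'k ^ 3) \<Rightarrow> 'k" assume "f \<in> inv_SO3 l"
  then show "f \<circ> phi l \<in> inv_SL2 l" by (rule inv_SO3_comp_phi)
  show "f \<circ> phi l = (\<lambda>_. 0) \<longleftrightarrow> (\<exists>h \<in> inv_SO3 l. f = (\<lambda>v. dlast l v * h v))"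
    using inv_SO3_kernel[OF assms \<open>f \<in> inv_SO3 l\<close>] dlast_mult_comp_phi by blast
next
  fix F :: "('k ^ 2) \<times> (nat \<Rightarrow> 'k ^ 3) \<Rightarrow> 'k" assume "F \<in> inv_SL2 l"
  then show "\<exists>f \<in> inv_SO3 l. F = f \<circ> phi l" by (rule inv_SL2_eq_comp_phi[OF assms])
qed

end
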